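(* Let $S$ be a Hausdorff topological semigroup containing the bicyclic semigroup $\mathcal C(p,q)$ as a dense subsemigroup. Then: (1) $S\setminus\mathcal C(p,q)$ is a two-sided ideal of $S$; (2) for every $c\in\mathcal C(p,q)$ the set $D_c=\{(x,y):x,y\in\mathcal C(p,q),\ xy=c\}$ is an open-and-closed discrete subspace of $S\times S$; (3) $S\times S$ is not pseudocompact; (4) if $S$ is Tychonoff, then its Stone–Čech compactification $\beta S$ is not openly factorizable; (5) the almost periodic compactification $\mathrm{AP}(S)$ of $S$ is a compact abelian topological group, and hence the canonical homomorphism $\eta:S\to\mathrm{AP}(S)$ is not injective.
   Context: The bicyclic semigroup $\mathcal C(p,q)$ is the semigroup with identity $1$ generated by $p,q$ subject to the single relation $qp=1$; every element is uniquely $p^nq^m$ ($n,m\in\omega$). A space is pseudocompact if every locally finite open cover is finite. A space $X$ is openly factorizable if every continuous map $f:X\to Y$ to a separable metrizable $Y$ factors as $f=g\circ p$ with $p:X\to K$ an open continuous surjection onto a separable metrizable $K$ and $g:K\to Y$ continuous. The almost periodic compactification of a semitopological semigroup $S$ is a pair $(\mathrm{AP}(S),\eta)$ where $\mathrm{AP}(S)$ is a compact Hausdorff topological semigroup and $\eta:S\to\mathrm{AP}(S)$ is a continuous homomorphism such that every continuous homomorphism $h:S\to K$ into a compact Hausdorff topological semigroup $K$ factors uniquely as $h=\bar h\circ\eta$ with $\bar h:\mathrm{AP}(S)\to K$ a continuous homomorphism. *)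

theory Defs
  imports "HOL-Analysis.Analysis"
begin

text \<open>The bicyclic semigroup C(p,q): the pair (n,m) stands for p^n q^m; qp = 1.\<close>
definition bicyclic_mult :: "nat \<times> nat \<Rightarrow> nat \<times> nat \<Rightarrow> nat \<times> nat" where
  "bicyclic_mult x y =
     (case x of (n, m) \<Rightarrow> case y of (k, l) \<Rightarrow>
        if m \<le> k then (n + k - m, l) else (n, m - k + l))"

definition pseudocompact_space :: "'a topology \<Rightarrow> bool" where
  "pseudocompact_space X \<longleftrightarrow>
     (\<forall>\<U>. (\<forall>U\<in>\<U>. openin X U) \<and> \<Union>\<U> = topspace X \<and> locally_finite_in X \<U>
           \<longrightarrow> finite \<U>)"

text \<open>Separable metrizable spaces Y and K are taken to be
  topologies on subsets of the type real; every separable metrizable space has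
  cardinality at most continuum, hence is homeomorphic to such a space.\<close>
definition openly_factorizable :: "'b topology \<Rightarrow> bool" where
  "openly_factorizable X \<longleftrightarrow>
     (\<forall>(Y::real topology) f.
        separable_space Y \<and> metrizable_space Y \<and> continuous_map X Y f \<longrightarrow>
        (\<exists>(K::real topology) p g.
           separable_space K \<and> metrizable_space K \<and>
           continuous_map X K p \<and> open_map X K p \<and> p ` topspace X = topspace K \<and>
           continuous_map K Y g \<and> (\<forall>x\<in>topspace X. f x = g (p x))))"

definition stone_cech_compactification ::
    "'a topology \<Rightarrow> 'b topology \<Rightarrow> ('a \<Rightarrow> 'b) \<Rightarrow> bool" where
  "stone_cech_compactification X K j \<longleftrightarrow>
     compact_space K \<and> Hausdorff_space K \<and> embedding_map X K j \<and>
     K closure_of (j ` topspace X) = topspace K \<and>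
     (\<forall>f. continuous_map X (top_of_set {0..1::real}) f \<longrightarrow>
        (\<exists>g. continuous_map K (top_of_set {0..1::real}) g \<and>
             (\<forall>x\<in>topspace X. g (j x) = f x)))"

definition topological_semigroup_on :: "'c topology \<Rightarrow> ('c \<Rightarrow> 'c \<Rightarrow> 'c) \<Rightarrow> bool" where
  "topological_semigroup_on K m \<longleftrightarrow>
     (\<forall>x\<in>topspace K. \<forall>y\<in>topspace K. m x y \<in> topspace K) \<and>
     (\<forall>x\<in>topspace K. \<forall>y\<in>topspace K. \<forall>z\<in>topspace K. m (m x y) z = m x (m y z)) \<and>
     continuous_map (prod_topology K K) K (\<lambda>z. m (fst z) (snd z))"

definition compact_hausdorff_topsemigroup :: "'c topology \<Rightarrow> ('c \<Rightarrow> 'c \<Rightarrow> 'c) \<Rightarrow> bool" where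
  "compact_hausdorff_topsemigroup K m \<longleftrightarrow>
     compact_space K \<and> Hausdorff_space K \<and> topological_semigroup_on K m"

definition cont_hom_into :: "'c topology \<Rightarrow> ('c \<Rightarrow> 'c \<Rightarrow> 'c) \<Rightarrow> ('a::{times,topological_space} \<Rightarrow> 'c) \<Rightarrow> bool" where
  "cont_hom_into K m h \<longleftrightarrow>
     continuous_map euclidean K h \<and> (\<forall>x y. h (x * y) = m (h x) (h y))"

text \<open>(A, mA, eta) is the almost periodic compactification of 'a: universal among
  continuous homomorphisms into compact Hausdorff topological semigroups
  (targets ranging over topologies on the same type as A).\<close>
definition almost_periodic_compactification ::
    "'c topology \<Rightarrow> ('c \<Rightarrow> 'c \<Rightarrow> 'c) \<Rightarrow> ('a::{times,topological_space} \<Rightarrow> 'c) \<Rightarrow> bool" where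
  "almost_periodic_compactification A mA eta \<longleftrightarrow>
     compact_hausdorff_topsemigroup A mA \<and> cont_hom_into A mA eta \<and>
     (\<forall>(K::'c topology) mK h.
        compact_hausdorff_topsemigroup K mK \<and> cont_hom_into K mK h \<longrightarrow>
        (\<exists>hb. continuous_map A K hb \<and>
              (\<forall>x\<in>topspace A. \<forall>y\<in>topspace A. hb (mA x y) = mK (hb x) (hb y)) \<and>
              (\<forall>s. h s = hb (eta s)) \<and>
              (\<forall>hb'. continuous_map A K hb' \<and>
                  (\<forall>x\<in>topspace A. \<forall>y\<in>topspace A. hb' (mA x y) = mK (hb' x) (hb' y)) \<and>
                  (\<forall>s. h s = hb' (eta s)) \<longrightarrow> (\<forall>z\<in>topspace A. hb' z = hb z))))"

definition compact_abelian_topological_group :: "'c topology \<Rightarrow> ('c \<Rightarrow> 'c \<Rightarrow> 'c) \<Rightarrow> bool" where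
  "compact_abelian_topological_group A m \<longleftrightarrow>
     compact_space A \<and> Hausdorff_space A \<and> topological_semigroup_on A m \<and>
     (\<forall>x\<in>topspace A. \<forall>y\<in>topspace A. m x y = m y x) \<and>
     (\<exists>e\<in>topspace A. \<exists>inv.
        (\<forall>x\<in>topspace A. m e x = x \<and> m x e = x) \<and>
        continuous_map A A inv \<and>
        (\<forall>x\<in>topspace A. m x (inv x) = e \<and> m (inv x) x = e))"

end

theory Submission
  imports Defs
begin

text \<open>
  The whole argument rests on one
  observation: every point of \<open>C(p,q)\<close> is isolated in \<open>S\<close>, while each equation \<open>x y = c\<close>
  with one factor fixed has only finitely many solutions in \<open>C(p,q)\<close>. From this,
  (1) products with a remainder point never land in \<open>C(p,q)\<close>; (2) the sets \<open>D\<^sub>c\<close> are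
  preimages of clopen points under multiplication; (3) \<open>D\<^sub>1\<close> is an infinite closed
  discrete subset of \<open>S \<times> S\<close>; (4) an open factorization of \<open>\<beta>S\<close> would make a
  subsequence of \<open>(q\<^sup>n, p\<^sup>n)\<close> converge in \<open>S \<times> S\<close>, against (1); and (5) since no compact
  topological semigroup contains the bicyclic semigroup, \<open>\<eta>\<close> identifies \<open>pq\<close> with \<open>1\<close>,
  and the image of \<open>C(p,q)\<close> becomes a dense abelian group in \<open>AP(S)\<close>.
\<close>

lemma bicyclic_mult_pairs:
  "bicyclic_mult (n, m) (k, l) = (if m \<le> k then (n + k - m, l) else (n, m - k + l))"
  by (simp add: bicyclic_mult_def)

lemma finite_left_factors: "finite {x. bicyclic_mult x y = c}"
proof -
  obtain k l a b where yc: "y = (k, l)" "c = (a, b)" by fastforce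
  have "{x. bicyclic_mult x y = c} \<subseteq> {..a} \<times> {..b + k}"
    by (auto simp: yc bicyclic_mult_pairs split: if_splits)
  then show ?thesis by (rule finite_subset) simp
qed

lemma finite_right_factors: "finite {x. bicyclic_mult y x = c}"
proof -
  obtain n m a b where yc: "y = (n, m)" "c = (a, b)" by fastforce
  have "{x. bicyclic_mult y x = c} \<subseteq> {..a + m} \<times> {..b}"
    by (auto simp: yc bicyclic_mult_pairs split: if_splits)
  then show ?thesis by (rule finite_subset) simp
qed

lemma finite_middle_factors: "finite {x. bicyclic_mult (bicyclic_mult y x) z = c}"
proof -
  have "{x. bicyclic_mult (bicyclic_mult y x) z = c}
      = (\<Union>a\<in>{a. bicyclic_mult a z = c}. {x. bicyclic_mult y x = a})" by auto
  then show ?thesis by (simp add: finite_left_factors finite_right_factors)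
qed

text \<open>A space containing an infinite closed set \<open>D\<close> of isolated points is not
  pseudocompact: the complement of \<open>D\<close> together with the singletons of \<open>D\<close> form an
  infinite locally finite open cover.\<close>

lemma not_pseudocompact_space:
  assumes closed: "closedin X D" and infinite: "infinite D"
    and isolated: "\<And>z. z \<in> D \<Longrightarrow> openin X {z}"
  shows "\<not> pseudocompact_space X"
proof
  assume pc: "pseudocompact_space X"
  define \<U> where "\<U> = insert (topspace X - D) ((\<lambda>z. {z}) ` D)"
  have D_sub: "D \<subseteq> topspace X" using closed closedin_subset by blast
  have "locally_finite_in X \<U>"
    unfolding locally_finite_in_def
  proof (intro conjI ballI)
    show "\<Union>\<U> \<subseteq> topspace X" using D_sub by (auto simp: \<U>_def)
    fix x assume x: "x \<in> topspace X"
    show "\<exists>V. openin X V \<and> x \<in> V \<and> finite {U \<in> \<U>. U \<inter> V \<noteq> {}}"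
    proof (cases "x \<in> D")
      case True
      have "{U \<in> \<U>. U \<inter> {x} \<noteq> {}} \<subseteq> {{x}}" using True by (auto simp: \<U>_def)
      then show ?thesis using isolated[OF True] finite_subset by blast
    next
      case False
      have "{U \<in> \<U>. U \<inter> (topspace X - D) \<noteq> {}} \<subseteq> {topspace X - D}" by (auto simp: \<U>_def)
      then show ?thesis using closed False x finite_subset by blast
    qed
  qed
  moreover have "\<forall>U\<in>\<U>. openin X U" using closed isolated by (auto simp: \<U>_def)
  moreover have "\<Union>\<U> = topspace X" using D_sub by (auto simp: \<U>_def)
  ultimately have "finite \<U>" using pc by (simp add: pseudocompact_space_def)
  moreover have "inj_on (\<lambda>z. {z}) D" by (simp add: inj_on_def)
  then have "infinite ((\<lambda>z. {z}) ` D)" using infinite finite_imageD by blast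
  ultimately show False by (simp add: \<U>_def)
qed

lemma closure_of_image_mem:
  "continuous_map X Y g \<Longrightarrow> x \<in> X closure_of S \<Longrightarrow> g x \<in> Y closure_of (g ` S)"
  using continuous_map_image_closure_subset by blast

lemma compact_space_tail_cluster:
  fixes \<sigma> :: "nat \<Rightarrow> 'a"
  assumes compact: "compact_space X" and in_X: "\<And>n. \<sigma> n \<in> topspace X"
  shows "\<exists>z\<in>topspace X. \<forall>N. z \<in> X closure_of (\<sigma> ` {N..})"
proof -
  define \<U> where "\<U> = range (\<lambda>N. X closure_of (\<sigma> ` {N..}))"
  have "\<Inter>\<F> \<noteq> {}" if \<F>: "finite \<F>" "\<F> \<subseteq> \<U>" for \<F>
  proof -
    obtain I where I: "finite I" "\<F> = (\<lambda>N. X closure_of (\<sigma> ` {N..})) ` I"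
      using \<F> unfolding \<U>_def by (meson finite_subset_image)
    have "\<sigma> (Max (insert 0 I)) \<in> X closure_of (\<sigma> ` {N..})" if "N \<in> I" for N
    proof -
      have "\<sigma> (Max (insert 0 I)) \<in> \<sigma> ` {N..}" using that I(1) by auto
      moreover have "\<sigma> ` {N..} \<subseteq> topspace X" using in_X by auto
      ultimately show ?thesis using closure_of_subset by blast
    qed
    then show ?thesis using I(2) by blast
  qed
  then have "\<Inter>\<U> \<noteq> {}" using compact unfolding compact_space_fip by (auto simp: \<U>_def)
  then obtain z where z: "z \<in> \<Inter>\<U>" by auto
  then have "z \<in> topspace X" using closure_of_subset_topspace by (fastforce simp: \<U>_def)
  with z show ?thesis by (auto simp: \<U>_def)
qed

text \<open>Closed graph theorem: a map into a compact space whose graph is closed is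
  continuous, since the projection along a compact factor is a closed map.\<close>

lemma continuous_map_closed_graph:
  assumes compact: "compact_space Y" and maps: "f \<in> topspace X \<rightarrow> topspace Y"
    and graph: "closedin (prod_topology X Y) {z \<in> topspace X \<times> topspace Y. snd z = f (fst z)}"
  shows "continuous_map X Y f"
  unfolding continuous_map_closedin
proof (intro conjI allI impI)
  show "f \<in> topspace X \<rightarrow> topspace Y" by (rule maps)
  fix C assume C: "closedin Y C"
  let ?G = "{z \<in> topspace X \<times> topspace Y. snd z = f (fst z)}"
  have "closedin (prod_topology X Y) (?G \<inter> topspace X \<times> C)"
    using graph C by (intro closedin_Int) (auto simp: closedin_prod_Times_iff)
  then have "closedin X (fst ` (?G \<inter> topspace X \<times> C))"
    using closed_map_fst[OF compact, of X] by (simp add: closed_map_def)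
  moreover have "fst ` (?G \<inter> topspace X \<times> C) = {x \<in> topspace X. f x \<in> C}"
    using maps by force
  ultimately show "closedin X {x \<in> topspace X. f x \<in> C}" by simp
qed

lemma compact_metrizable_convergent_subsequence:
  fixes x :: "nat \<Rightarrow> 'a"
  assumes "compact_space M" "metrizable_space M" "range x \<subseteq> topspace M"
  shows "\<exists>r l. strict_mono r \<and> limitin M (x \<circ> r) l sequentially"
proof -
  obtain S d where S: "Metric_space S d" and M: "M = Metric_space.mtopology S d"
    using assms(2) by (auto simp: metrizable_space_def)
  then show ?thesis
    using assms(1,3) Metric_space.compact_space_sequentially[OF S] Metric_space.topspace_mtopology[OF S]
    by metis
qed

lemma injective_sequence_not_tendsto_isolated:
  fixes x :: "nat \<Rightarrow> 'a::topological_space"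
  assumes "inj x" and "open {s}" and "x \<longlonglongrightarrow> s"
  shows False
proof -
  obtain N where "\<And>k. k \<ge> N \<Longrightarrow> x k = s"
    using topological_tendstoD[OF assms(3,2)] by (auto simp: eventually_sequentially)
  then have "x N = x (Suc N)" by simp
  with \<open>inj x\<close> show False by (simp add: inj_eq)
qed

lemma second_countable_real: "second_countable (euclidean :: real topology)"
proof -
  obtain \<B> :: "real set set" where \<B>: "countable \<B>" "\<And>C. C \<in> \<B> \<Longrightarrow> open C"
      "\<And>S. open S \<Longrightarrow> \<exists>\<U>. \<U> \<subseteq> \<B> \<and> S = \<Union>\<U>"
    by (metis univ_second_countable)
  show ?thesis unfolding second_countable_def
  proof (intro exI conjI ballI allI impI)
    fix U :: "real set" and x assume U: "openin euclidean U \<and> x \<in> U"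
    then obtain \<U> where "\<U> \<subseteq> \<B>" "U = \<Union>\<U>" using \<B>(3) by auto
    then show "\<exists>V\<in>\<B>. x \<in> V \<and> V \<subseteq> U" using U by auto
  qed (use \<B> in auto)
qed

lemma unit_interval_separable_metrizable:
  "separable_space (top_of_set {0..1::real}) \<and> metrizable_space (top_of_set {0..1::real})"
  by (intro conjI second_countable_imp_separable_space second_countable_subtopology
      second_countable_real metrizable_space_subtopology metrizable_space_euclidean)

lemma embedding_map_reflects_limit:
  assumes emb: "embedding_map X K j" and lim: "limitin K (\<lambda>k. j (x k)) (j s) F"
    and in_X: "s \<in> topspace X" "range x \<subseteq> topspace X"
  shows "limitin X x s F"
proof -
  obtain h where "homeomorphic_maps X (subtopology K (j ` topspace X)) j h"
    using emb by (auto simp: embedding_map_def homeomorphic_map_maps)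
  then have h: "continuous_map (subtopology K (j ` topspace X)) X h"
    and hj: "\<And>y. y \<in> topspace X \<Longrightarrow> h (j y) = y"
    by (auto simp: homeomorphic_maps_def)
  have "limitin (subtopology K (j ` topspace X)) (\<lambda>k. j (x k)) (j s) F"
    using lim in_X by (simp add: limitin_subtopology image_subset_iff always_eventually)
  from continuous_map_limit[OF h this]
  show ?thesis using in_X by (simp add: o_def hj subset_iff)
qed

text \<open>An open map reflects convergence of points that are alone in their fibre:
  the image of a neighbourhood \<open>U\<close> of the limit is open, and a point of \<open>U\<close> in the
  fibre of \<open>z k\<close> can only be \<open>z k\<close> itself.\<close>

lemma open_map_reflects_limit:
  assumes open_map: "open_map K M p" and \<sigma>: "\<sigma> \<in> topspace K"
    and fibres: "\<And>k u. u \<in> topspace K \<Longrightarrow> p u = p (z k) \<Longrightarrow> u = z k"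
    and lim: "limitin M (\<lambda>k. p (z k)) (p \<sigma>) F"
  shows "limitin K z \<sigma> F"
  unfolding limitin_def
proof (intro conjI allI impI)
  fix U assume U: "openin K U \<and> \<sigma> \<in> U"
  then have "openin M (p ` U)" using open_map by (simp add: open_map_def)
  then have "\<forall>\<^sub>F k in F. p (z k) \<in> p ` U" using lim U unfolding limitin_def by blast
  then show "\<forall>\<^sub>F k in F. z k \<in> U"
  proof (rule eventually_mono)
    fix k assume "p (z k) \<in> p ` U"
    then obtain u where u: "u \<in> U" "p u = p (z k)" by auto
    moreover have "u \<in> topspace K" using u(1) U openin_subset by blast
    ultimately show "z k \<in> U" using fibres by metis
  qed
qed (rule \<sigma>)

lemma extension_fibre_of_isolated_value:
  assumes Hausdorff: "Hausdorff_space K" and dense: "K closure_of (j ` topspace X) = topspace K"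
    and j_in: "j x\<^sub>0 \<in> topspace K"
    and f: "continuous_map K euclidean f" and f_ext: "\<And>x. x \<in> topspace X \<Longrightarrow> f (j x) = F x"
    and I: "open I" "F x\<^sub>0 \<in> I" and only: "\<And>x. x \<in> topspace X \<Longrightarrow> F x \<in> I \<Longrightarrow> x = x\<^sub>0"
    and z: "z \<in> topspace K" "f z = F x\<^sub>0"
  shows "z = j x\<^sub>0"
proof (rule ccontr)
  assume "z \<noteq> j x\<^sub>0"
  define W where "W = {w \<in> topspace K. f w \<in> I} - {j x\<^sub>0}"
  have "openin K W" unfolding W_def
    using I(1) closedin_Hausdorff_singleton[OF Hausdorff j_in]
    by (intro openin_diff openin_continuous_map_preimage[OF f]) auto
  moreover have "W \<inter> K closure_of (j ` topspace X) \<noteq> {}"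
    using z I(2) \<open>z \<noteq> j x\<^sub>0\<close> dense by (auto simp: W_def)
  ultimately obtain x where "x \<in> topspace X" "j x \<in> W"
    using openin_Int_closure_of_eq_empty[OF \<open>openin K W\<close>] by blast
  then show False using f_ext only by (auto simp: W_def)
qed

lemma stone_cech_continuous:
  assumes "stone_cech_compactification X K j"
  shows "continuous_map X K j"
proof -
  have "continuous_map X (subtopology K (j ` topspace X)) j"
    using assms homeomorphic_imp_continuous_map
    by (auto simp: stone_cech_compactification_def embedding_map_def)
  then show ?thesis by (simp add: continuous_map_in_subtopology)
qed

lemma clopen_indicator_continuous:
  assumes "open E" and "closed E"
  shows "continuous_map euclidean (top_of_set {0..1}) (\<lambda>y. if y \<in> E then 1 else 0 :: real)"
  unfolding continuous_map_def
proof (intro conjI allI impI)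
  show "(\<lambda>y. if y \<in> E then 1 else 0 :: real) \<in> topspace euclidean \<rightarrow> topspace (top_of_set {0..1})"
    by auto
  fix B :: "real set"
  have "{y \<in> topspace euclidean. (if y \<in> E then 1 else 0) \<in> B}
        = (if 1 \<in> B then E else {}) \<union> (if 0 \<in> B then - E else {})"
    by auto
  then show "openin euclidean {y \<in> topspace euclidean. (if y \<in> E then 1 else 0) \<in> B}"
    using assms by (auto simp: open_Compl)
qed

text \<open>Let \<open>j x\<^sub>k\<close> converge, in a Hausdorff space \<open>K\<close>, to a point outside the image of \<open>j\<close>.
  If all \<open>x\<^sub>k\<close> are isolated, then every set of terms \<open>x ` A\<close> is closed: a point of its
  closure is either a term, hence isolated, or is separated from the limit, and then
  a neighbourhood of it avoids all but finitely many terms, and those finitely many too.\<close>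

lemma isolated_terms_closed:
  fixes x :: "nat \<Rightarrow> 'a::t1_space"
  assumes Hausdorff: "Hausdorff_space K" and j_cont: "continuous_map euclidean K j"
    and isolated: "\<And>k. open {x k}"
    and lim: "limitin K (\<lambda>k. j (x k)) \<sigma> sequentially" and \<sigma>: "\<sigma> \<notin> range j"
  shows "closed (x ` A)"
proof -
  have "s \<in> x ` A" if s: "s \<in> closure (x ` A)" for s
  proof (cases "s \<in> range x")
    case True
    then obtain k where "s = x k" by auto
    then have "{s} \<inter> x ` A \<noteq> {}" using open_Int_closure_eq_empty[OF isolated[of k]] s by auto
    then show ?thesis by auto
  next
    case False
    have "j s \<noteq> \<sigma>" using \<sigma> by auto
    moreover have "\<sigma> \<in> topspace K" using lim by (simp add: limitin_def)
    moreover have "j s \<in> topspace K" using j_cont by (auto simp: continuous_map_def)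
    ultimately obtain U V where UV: "openin K U" "openin K V" "j s \<in> U" "\<sigma> \<in> V" "disjnt U V"
      using Hausdorff unfolding Hausdorff_space_def by metis
    have "\<forall>\<^sub>F k in sequentially. j (x k) \<in> V" using lim UV(2,4) unfolding limitin_def by blast
    then obtain N where N: "\<And>k. k \<ge> N \<Longrightarrow> j (x k) \<in> V"
      unfolding eventually_sequentially by blast
    define W where "W = {y. j y \<in> U} - x ` {..<N}"
    have "open {y. j y \<in> U}"
      using openin_continuous_map_preimage[OF j_cont UV(1)] by simp
    then have "open W" unfolding W_def by (intro open_Diff finite_imp_closed) auto
    moreover have "s \<in> W" using False UV(3) by (auto simp: W_def)
    ultimately have "W \<inter> x ` A \<noteq> {}" using s open_Int_closure_eq_empty[of W "x ` A"] by blast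
    then obtain k where k: "x k \<in> W" by auto
    then have "k \<ge> N" by (auto simp: W_def)
    then show ?thesis using N k UV(5) by (auto simp: W_def disjnt_def)
  qed
  then show ?thesis using closure_subset_eq by blast
qed

text \<open>In a Stone-Cech compactification, an injective sequence of isolated points
  cannot converge to a point of the remainder: otherwise the set of its odd-indexed
  terms would be clopen, and its indicator function would have a continuous extension
  taking alternately the values \<open>0\<close> and \<open>1\<close> along a convergent sequence.\<close>

lemma stone_cech_limit_of_isolated_points:
  fixes x :: "nat \<Rightarrow> 'a::t1_space"
  assumes sc: "stone_cech_compactification euclidean K j"
    and isolated: "\<And>k. open {x k}" and inj: "inj x"
    and lim: "limitin K (\<lambda>k. j (x k)) \<sigma> sequentially"
  shows "\<sigma> \<in> range j"
proof (rule ccontr)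
  assume \<sigma>: "\<sigma> \<notin> range j"
  have Hausdorff: "Hausdorff_space K"
    and ext: "\<And>f. continuous_map euclidean (top_of_set {0..1::real}) f \<Longrightarrow>
        \<exists>g. continuous_map K (top_of_set {0..1::real}) g \<and> (\<forall>x. g (j x) = f x)"
    using sc by (auto simp: stone_cech_compactification_def)
  define E where "E = x ` {k. odd k}"
  have x_in_E: "x k \<in> E \<longleftrightarrow> odd k" for k
    using inj by (auto simp: E_def dest: injD)
  have "E = (\<Union>k\<in>{k. odd k}. {x k})" by (auto simp: E_def)
  then have "open E" using isolated by auto
  moreover have "closed E" unfolding E_def
    using isolated_terms_closed[OF Hausdorff stone_cech_continuous[OF sc] isolated lim \<sigma>] .
  ultimately obtain g where g: "continuous_map K (top_of_set {0..1::real}) g"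
    "\<And>y. g (j y) = (if y \<in> E then 1 else 0)"
    using ext[OF clopen_indicator_continuous] by blast
  have "limitin (top_of_set {0..1}) (\<lambda>k. g (j (x k))) (g \<sigma>) sequentially"
    using continuous_map_limit[OF g(1) lim] by (simp add: o_def)
  then have "(\<lambda>k. if odd k then 1 else 0 :: real) \<longlonglongrightarrow> g \<sigma>"
    by (simp add: limitin_subtopology g(2) x_in_E)
  then have "\<forall>\<^sub>F k in sequentially. dist (if odd k then 1 else 0 :: real) (g \<sigma>) < 1/2"
    by (rule tendstoD) simp
  then obtain N :: nat where N: "\<And>k. k \<ge> N \<Longrightarrow> dist (if odd k then 1 else 0 :: real) (g \<sigma>) < 1/2"
    unfolding eventually_sequentially by blast
  have "dist 0 (g \<sigma>) < 1/2" "dist 1 (g \<sigma>) < 1/2"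
    using N[of "2 * N"] N[of "2 * N + 1"] by auto
  then show False by (simp add: dist_real_def)
qed

lemma topological_semigroup_translations:
  assumes "topological_semigroup_on K m" and "a \<in> topspace K"
  shows "continuous_map K K (\<lambda>x. m a x)" and "continuous_map K K (\<lambda>x. m x a)"
proof -
  have mult: "continuous_map (prod_topology K K) K (\<lambda>z. m (fst z) (snd z))"
    using assms(1) by (simp add: topological_semigroup_on_def)
  have "continuous_map K (prod_topology K K) (\<lambda>x. (a, x))"
    and "continuous_map K (prod_topology K K) (\<lambda>x. (x, a))"
    using assms(2) by (auto intro: continuous_map_pairedI)
  from this(1)[THEN continuous_map_compose, OF mult] this(2)[THEN continuous_map_compose, OF mult]
  show "continuous_map K K (\<lambda>x. m a x)" and "continuous_map K K (\<lambda>x. m x a)"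
    by (simp_all add: o_def)
qed

text \<open>For a homomorphism \<open>\<psi>\<close> of the bicyclic semigroup into a compact Hausdorff
  topological semigroup write \<open>p = \<psi> (1,0)\<close>, \<open>q = \<psi> (0,1)\<close>, so that \<open>\<psi> (n,m) = p\<^sup>n q\<^sup>m\<close>.
  A cluster point \<open>(h, f)\<close> of the pairs \<open>(q\<^sup>n, p\<^sup>n)\<close> satisfies \<open>h f = 1\<close>, since \<open>q\<^sup>n p\<^sup>n = 1\<close>.\<close>

lemma bicyclic_hom_cluster_pair:
  assumes K: "compact_hausdorff_topsemigroup K m"
    and in_K: "\<And>x. \<psi> x \<in> topspace K"
    and hom: "\<And>x y. \<psi> (bicyclic_mult x y) = m (\<psi> x) (\<psi> y)"
  obtains h f where "h \<in> topspace K" "f \<in> topspace K" "m h f = \<psi> (0, 0)"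
    "h \<in> K closure_of range (\<lambda>n. \<psi> (0, n))"
    "\<And>N. f \<in> K closure_of ((\<lambda>n. \<psi> (n, 0)) ` {N..})"
proof -
  have Hausdorff: "Hausdorff_space K" and compact: "compact_space K"
    and mult: "continuous_map (prod_topology K K) K (\<lambda>z. m (fst z) (snd z))"
    using K by (auto simp: compact_hausdorff_topsemigroup_def topological_semigroup_on_def)
  define \<sigma> where "\<sigma> n = (\<psi> (0, n), \<psi> (n, 0))" for n
  obtain h f where hf: "(h, f) \<in> topspace (prod_topology K K)"
    and cluster: "\<And>N. (h, f) \<in> prod_topology K K closure_of (\<sigma> ` {N..})"
    using compact_space_tail_cluster[of "prod_topology K K" \<sigma>] compact in_K
    by (auto simp: \<sigma>_def compact_space_prod_topology)
  have "m h f \<in> K closure_of ((\<lambda>z. m (fst z) (snd z)) ` \<sigma> ` {0..})"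
    using closure_of_image_mem[OF mult cluster[of 0]] by simp
  moreover have "m (\<psi> (0, n)) (\<psi> (n, 0)) = \<psi> (0, 0)" for n
    by (simp add: hom[symmetric] bicyclic_mult_pairs)
  then have "(\<lambda>z. m (fst z) (snd z)) ` \<sigma> ` {0..} = {\<psi> (0, 0)}"
    by (simp add: \<sigma>_def image_image)
  moreover have "K closure_of {\<psi> (0, 0)} = {\<psi> (0, 0)}"
    by (rule closure_of_closedin[OF closedin_Hausdorff_singleton[OF Hausdorff in_K]])
  ultimately have "m h f = \<psi> (0, 0)" by simp
  moreover have "h \<in> K closure_of range (\<lambda>n. \<psi> (0, n))"
    using closure_of_image_mem[OF continuous_map_fst cluster[of 0]]
    by (simp add: \<sigma>_def image_image)
  moreover have "f \<in> K closure_of ((\<lambda>n. \<psi> (n, 0)) ` {N..})" for N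
    using closure_of_image_mem[OF continuous_map_snd cluster[of N]]
    by (simp add: \<sigma>_def image_image)
  ultimately show thesis using that hf by auto
qed

text \<open>Consequently \<open>1\<close> is a limit of positive powers of \<open>p\<close>: each \<open>q\<^sup>k f\<close> is a limit of the
  powers \<open>q\<^sup>k p\<^sup>n = p\<^sup>n\<^sup>-\<^sup>k\<close> (\<open>n > k\<close>), the set of \<open>x\<close> with \<open>x f\<close> in their closure is closed,
  and it therefore contains \<open>h\<close>, giving \<open>h f = 1\<close>.\<close>

lemma bicyclic_hom_identity_limit_of_powers:
  assumes K: "compact_hausdorff_topsemigroup K m"
    and in_K: "\<And>x. \<psi> x \<in> topspace K"
    and hom: "\<And>x y. \<psi> (bicyclic_mult x y) = m (\<psi> x) (\<psi> y)"
  shows "\<psi> (0, 0) \<in> K closure_of range (\<lambda>n. \<psi> (Suc n, 0))"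
proof -
  have tsg: "topological_semigroup_on K m" using K by (simp add: compact_hausdorff_topsemigroup_def)
  obtain h f where hf: "h \<in> topspace K" "f \<in> topspace K" "m h f = \<psi> (0, 0)"
    and h_cluster: "h \<in> K closure_of range (\<lambda>n. \<psi> (0, n))"
    and f_cluster: "\<And>N. f \<in> K closure_of ((\<lambda>n. \<psi> (n, 0)) ` {N..})"
    using bicyclic_hom_cluster_pair[OF K in_K hom] by blast
  define P where "P = range (\<lambda>n. \<psi> (Suc n, 0))"
  have "m (\<psi> (0, k)) f \<in> K closure_of P" for k
  proof -
    have "(\<lambda>x. m (\<psi> (0, k)) x) ` (\<lambda>n. \<psi> (n, 0)) ` {Suc k..} \<subseteq> P"
    proof
      fix y assume "y \<in> (\<lambda>x. m (\<psi> (0, k)) x) ` (\<lambda>n. \<psi> (n, 0)) ` {Suc k..}"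
      then obtain n where "n \<ge> Suc k" "y = m (\<psi> (0, k)) (\<psi> (n, 0))" by auto
      moreover from this have "bicyclic_mult (0, k) (n, 0) = (Suc (n - Suc k), 0)"
        by (simp add: bicyclic_mult_pairs)
      ultimately show "y \<in> P" by (simp add: P_def hom[symmetric])
    qed
    then show ?thesis
      using closure_of_image_mem[OF topological_semigroup_translations(1)[OF tsg in_K] f_cluster]
        closure_of_mono by blast
  qed
  then have "range (\<lambda>n. \<psi> (0, n)) \<subseteq> {x \<in> topspace K. m x f \<in> K closure_of P}"
    using in_K by auto
  moreover have "closedin K {x \<in> topspace K. m x f \<in> K closure_of P}"
    using hf(2) by (intro closedin_continuous_map_preimage[of K K]
        topological_semigroup_translations(2)[OF tsg]) auto
  ultimately have "h \<in> {x \<in> topspace K. m x f \<in> K closure_of P}"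
    using h_cluster closure_of_minimal by blast
  then show ?thesis using hf(3) by (simp add: P_def)
qed

text \<open>The bicyclic semigroup does not embed into a compact Hausdorff topological
  semigroup: every homomorphism into one identifies \<open>pq = \<psi> (1,1)\<close> with \<open>1 = \<psi> (0,0)\<close>.
  Indeed \<open>q = q \<cdot> 1\<close> is a limit of the powers \<open>q p\<^sup>n\<^sup>+\<^sup>1 = p\<^sup>n\<close>, which all commute with \<open>p\<close>;
  hence \<open>q\<close> commutes with \<open>p\<close> and \<open>pq = qp = 1\<close>.\<close>

lemma bicyclic_hom_collapse:
  assumes K: "compact_hausdorff_topsemigroup K m"
    and in_K: "\<And>x. \<psi> x \<in> topspace K"
    and hom: "\<And>x y. \<psi> (bicyclic_mult x y) = m (\<psi> x) (\<psi> y)"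
  shows "\<psi> (1, 1) = \<psi> (0, 0)"
proof -
  have Hausdorff: "Hausdorff_space K" and tsg: "topological_semigroup_on K m"
    using K by (auto simp: compact_hausdorff_topsemigroup_def)
  note left = topological_semigroup_translations(1)[OF tsg in_K]
    and right = topological_semigroup_translations(2)[OF tsg in_K]
  define P where "P = range (\<lambda>n. \<psi> (Suc n, 0))"
  define C where "C = {x \<in> topspace K. m x (\<psi> (1, 0)) = m (\<psi> (1, 0)) x}"
  have "closedin K C"
    unfolding C_def by (rule closedin_continuous_maps_eq[OF Hausdorff right left])
  moreover have "(\<lambda>x. m (\<psi> (0, 1)) x) ` P \<subseteq> C"
  proof
    fix y assume "y \<in> (\<lambda>x. m (\<psi> (0, 1)) x) ` P"
    then obtain n where "y = m (\<psi> (0, 1)) (\<psi> (Suc n, 0))" by (auto simp: P_def)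
    moreover have "bicyclic_mult (0, 1) (Suc n, 0) = (n, 0)" by (simp add: bicyclic_mult_pairs)
    moreover have "bicyclic_mult (n, 0) (1, 0) = bicyclic_mult (1, 0) (n, 0)"
      by (simp add: bicyclic_mult_pairs)
    ultimately show "y \<in> C" by (simp add: C_def in_K hom[symmetric])
  qed
  ultimately have "K closure_of ((\<lambda>x. m (\<psi> (0, 1)) x) ` P) \<subseteq> C"
    by (rule closure_of_minimal[rotated])
  moreover have "m (\<psi> (0, 1)) (\<psi> (0, 0)) = \<psi> (0, 1)"
    by (simp add: hom[symmetric] bicyclic_mult_pairs)
  moreover have "\<psi> (0, 0) \<in> K closure_of P"
    unfolding P_def by (rule bicyclic_hom_identity_limit_of_powers[OF K in_K hom])
  ultimately have "\<psi> (0, 1) \<in> C" using closure_of_image_mem[OF left[of "(0, 1)"]] by fastforce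
  then show ?thesis by (simp add: C_def hom[symmetric] bicyclic_mult_pairs)
qed

lemma collapsed_hom_shift:
  assumes hom: "\<And>x y. \<psi> (bicyclic_mult x y) = m (\<psi> x) (\<psi> y)"
    and collapse: "\<psi> (1, 1) = \<psi> (0, 0)"
  shows "\<psi> (n + k, l + k) = \<psi> (n, l)"
proof (induction k)
  case (Suc k)
  have "\<psi> (Suc (n + k), Suc (l + k)) = m (m (\<psi> (n + k, 0)) (\<psi> (1, 1))) (\<psi> (0, l + k))"
    by (simp add: hom[symmetric] bicyclic_mult_pairs)
  also have "\<dots> = \<psi> (n + k, l + k)"
    unfolding collapse by (simp add: hom[symmetric] bicyclic_mult_pairs)
  finally show ?case using Suc by simp
qed simp

lemma collapsed_hom_difference:
  assumes hom: "\<And>x y. \<psi> (bicyclic_mult x y) = m (\<psi> x) (\<psi> y)"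
    and collapse: "\<psi> (1, 1) = \<psi> (0, 0)"
    and diff: "int n - int l = int n' - int l'"
  shows "\<psi> (n, l) = \<psi> (n', l')"
proof -
  have canonical: "\<psi> (a, b) = \<psi> (a - b, b - a)" for a b
  proof -
    have "a - b + min a b = a" "b - a + min a b = b" by auto
    then show ?thesis using collapsed_hom_shift[OF hom collapse, of "a - b" "min a b" "b - a"] by simp
  qed
  have "n - l = n' - l'" "l - n = l' - n'" using diff by linarith+
  then show ?thesis by (metis canonical)
qed

lemma collapsed_hom_abelian_group:
  assumes hom: "\<And>x y. \<psi> (bicyclic_mult x y) = m (\<psi> x) (\<psi> y)"
    and collapse: "\<psi> (1, 1) = \<psi> (0, 0)"
  shows "m (\<psi> x) (\<psi> y) = m (\<psi> y) (\<psi> x)"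
    and "m (\<psi> (0, 0)) (\<psi> x) = \<psi> x"
    and "m (\<psi> (n, l)) (\<psi> (l, n)) = \<psi> (0, 0)"
proof -
  obtain a b c d where "bicyclic_mult x y = (a, b)" "bicyclic_mult y x = (c, d)"
    by fastforce
  moreover from this have "int a - int b = int c - int d"
    by (cases x, cases y) (auto simp: bicyclic_mult_pairs split: if_splits)
  ultimately show "m (\<psi> x) (\<psi> y) = m (\<psi> y) (\<psi> x)"
    using collapsed_hom_difference[OF hom collapse] by (metis hom)
  show "m (\<psi> (0, 0)) (\<psi> x) = \<psi> x"
    by (cases x) (simp add: hom[symmetric] bicyclic_mult_pairs)
  show "m (\<psi> (n, l)) (\<psi> (l, n)) = \<psi> (0, 0)"
    using collapsed_hom_difference[OF hom collapse, of n n 0 0]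
    by (simp add: hom[symmetric] bicyclic_mult_pairs)
qed

text \<open>In a compact Hausdorff commutative topological monoid, if the elements of a dense
  set are invertible then all elements are, and inversion is continuous: the
  invertible elements form the compact projection of \<open>{(x, y). x y = 1}\<close>, which is
  the graph of the (unique) inverse.\<close>

lemma compact_commutative_monoid_inverses:
  assumes K: "compact_hausdorff_topsemigroup K m" and u: "u \<in> topspace K"
    and comm: "\<And>x y. x \<in> topspace K \<Longrightarrow> y \<in> topspace K \<Longrightarrow> m x y = m y x"
    and unit: "\<And>x. x \<in> topspace K \<Longrightarrow> m u x = x"
    and G_sub: "G \<subseteq> topspace K" and G_dense: "K closure_of G = topspace K"
    and G_inv: "\<And>x. x \<in> G \<Longrightarrow> \<exists>y\<in>topspace K. m x y = u"
  obtains inv where "continuous_map K K inv"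
    "\<And>x. x \<in> topspace K \<Longrightarrow> inv x \<in> topspace K \<and> m x (inv x) = u"
proof -
  have Hausdorff: "Hausdorff_space K" and compact: "compact_space K"
    and mult: "continuous_map (prod_topology K K) K (\<lambda>z. m (fst z) (snd z))"
    and assoc: "\<And>x y z. x \<in> topspace K \<Longrightarrow> y \<in> topspace K \<Longrightarrow> z \<in> topspace K \<Longrightarrow>
                  m (m x y) z = m x (m y z)"
    using K by (simp_all add: compact_hausdorff_topsemigroup_def topological_semigroup_on_def)
  let ?R = "{z \<in> topspace (prod_topology K K). m (fst z) (snd z) = u}"
  have R_closed: "closedin (prod_topology K K) ?R"
    using closedin_continuous_map_preimage[OF mult closedin_Hausdorff_singleton[OF Hausdorff u]]
    by simp
  have "closedin K (fst ` ?R)"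
    using image_compactin[OF closedin_compact_space[OF _ R_closed] continuous_map_fst] compact
    by (auto intro: compactin_imp_closedin[OF Hausdorff] simp: compact_space_prod_topology)
  moreover have "G \<subseteq> fst ` ?R" using G_inv G_sub by force
  ultimately have "topspace K \<subseteq> fst ` ?R" using G_dense closure_of_minimal by metis
  then have inv_ex: "\<exists>y. y \<in> topspace K \<and> m x y = u" if "x \<in> topspace K" for x
    using that by force
  have inv_unique: "y = y'" if "x \<in> topspace K" "y \<in> topspace K" "y' \<in> topspace K"
    "m x y = u" "m x y' = u" for x y y'
    using that assoc comm unit by metis
  define inv where "inv x = (SOME y. y \<in> topspace K \<and> m x y = u)" for x
  have inv: "inv x \<in> topspace K \<and> m x (inv x) = u" if "x \<in> topspace K" for x
    using someI_ex[OF inv_ex[OF that]] by (simp add: inv_def)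
  have "?R = {z \<in> topspace K \<times> topspace K. snd z = inv (fst z)}"
    using inv inv_unique by auto
  then have "continuous_map K K inv"
    using R_closed inv compact by (intro continuous_map_closed_graph) auto
  with inv that show thesis by blast
qed

text \<open>A compact Hausdorff topological semigroup containing a dense abelian group
  (with identity \<open>u\<close>) is a compact abelian topological group: commutativity and the
  identity law are closed conditions, so they extend from the dense subgroup.\<close>

lemma compact_semigroup_dense_group:
  assumes K: "compact_hausdorff_topsemigroup K m"
    and G_sub: "G \<subseteq> topspace K" and G_dense: "K closure_of G = topspace K"
    and G_comm: "\<And>x y. x \<in> G \<Longrightarrow> y \<in> G \<Longrightarrow> m x y = m y x"
    and u: "u \<in> G" and G_unit: "\<And>x. x \<in> G \<Longrightarrow> m u x = x"
    and G_inv: "\<And>x. x \<in> G \<Longrightarrow> \<exists>y\<in>G. m x y = u"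
  shows "compact_abelian_topological_group K m"
proof -
  have Hausdorff: "Hausdorff_space K" and compact: "compact_space K"
    and tsg: "topological_semigroup_on K m"
    and mult: "continuous_map (prod_topology K K) K (\<lambda>z. m (fst z) (snd z))"
    using K by (auto simp: compact_hausdorff_topsemigroup_def topological_semigroup_on_def)
  have u_K: "u \<in> topspace K" using u G_sub by auto
  have comm: "m x y = m y x" if "x \<in> topspace K" "y \<in> topspace K" for x y
  proof -
    let ?E = "{z \<in> topspace (prod_topology K K). m (fst z) (snd z) = m (snd z) (fst z)}"
    have "continuous_map (prod_topology K K) (prod_topology K K) (\<lambda>z. (snd z, fst z))"
      by (intro continuous_map_pairedI continuous_map_fst continuous_map_snd)
    from continuous_map_compose[OF this mult]
    have "continuous_map (prod_topology K K) K (\<lambda>z. m (snd z) (fst z))" by (simp add: o_def)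
    then have "closedin (prod_topology K K) ?E"
      by (rule closedin_continuous_maps_eq[OF Hausdorff mult])
    moreover have "G \<times> G \<subseteq> ?E" using G_sub G_comm by auto
    ultimately have "prod_topology K K closure_of (G \<times> G) \<subseteq> ?E" by (rule closure_of_minimal[rotated])
    then show ?thesis using that G_dense by (auto simp: closure_of_Times)
  qed
  have unit: "m u x = x" if "x \<in> topspace K" for x
  proof -
    have "closedin K {x \<in> topspace K. m u x = id x}"
      by (rule closedin_continuous_maps_eq[OF Hausdorff
            topological_semigroup_translations(1)[OF tsg u_K] continuous_map_id])
    moreover have "G \<subseteq> {x \<in> topspace K. m u x = id x}" using G_sub G_unit by auto
    ultimately show ?thesis using G_dense closure_of_minimal that by fastforce
  qed
  obtain inv where "continuous_map K K inv"
    "\<And>x. x \<in> topspace K \<Longrightarrow> inv x \<in> topspace K \<and> m x (inv x) = u"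
    using compact_commutative_monoid_inverses[OF K u_K comm unit G_sub G_dense] G_inv G_sub
    by blast
  then show ?thesis
    unfolding compact_abelian_topological_group_def using compact Hausdorff tsg comm unit u_K
    by (intro conjI bexI[of _ u] exI[of _ inv]) auto
qed

lemma bicyclic_hom_dense_image_group:
  assumes K: "compact_hausdorff_topsemigroup K m"
    and in_K: "\<And>x. \<psi> x \<in> topspace K"
    and hom: "\<And>x y. \<psi> (bicyclic_mult x y) = m (\<psi> x) (\<psi> y)"
    and dense: "K closure_of range \<psi> = topspace K"
  shows "compact_abelian_topological_group K m"
proof -
  note group = collapsed_hom_abelian_group[OF hom bicyclic_hom_collapse[OF K in_K hom]]
  have inverses: "\<exists>y\<in>range \<psi>. m x y = \<psi> (0, 0)" if x: "x \<in> range \<psi>" for x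
  proof -
    from x obtain d where "x = \<psi> d" by blast
    then obtain n l where "x = \<psi> (n, l)" by (cases d) blast
    then show ?thesis using group(3)[of n l] by blast
  qed
  show ?thesis
  proof (rule compact_semigroup_dense_group[OF K _ dense _ _ _ inverses])
    show "range \<psi> \<subseteq> topspace K" using in_K by auto
    show "\<psi> (0, 0) \<in> range \<psi>" by simp
    show "m x y = m y x" if "x \<in> range \<psi>" "y \<in> range \<psi>" for x y
      using that group(1) by auto
    show "m (\<psi> (0, 0)) x = x" if "x \<in> range \<psi>" for x
      using that group(2) by auto
  qed
qed

lemma closure_of_subsemigroup:
  assumes tsg: "topological_semigroup_on A m"
    and S_mult: "\<And>x y. x \<in> S \<Longrightarrow> y \<in> S \<Longrightarrow> m x y \<in> S"
    and xy: "x \<in> A closure_of S" "y \<in> A closure_of S"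
  shows "m x y \<in> A closure_of S"
proof -
  have mult: "continuous_map (prod_topology A A) A (\<lambda>z. m (fst z) (snd z))"
    using tsg by (simp add: topological_semigroup_on_def)
  have "(x, y) \<in> prod_topology A A closure_of (S \<times> S)"
    using xy by (simp add: closure_of_Times)
  from closure_of_image_mem[OF mult this]
  have "m x y \<in> A closure_of ((\<lambda>z. m (fst z) (snd z)) ` (S \<times> S))" by simp
  moreover have "(\<lambda>z. m (fst z) (snd z)) ` (S \<times> S) \<subseteq> S" using S_mult by auto
  ultimately show ?thesis using closure_of_mono by blast
qed

lemma closed_subsemigroup:
  assumes A: "compact_hausdorff_topsemigroup A m" and C: "closedin A C"
    and C_mult: "\<And>x y. x \<in> C \<Longrightarrow> y \<in> C \<Longrightarrow> m x y \<in> C"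
  shows "compact_hausdorff_topsemigroup (subtopology A C) m"
proof -
  have compact: "compact_space A" and Hausdorff: "Hausdorff_space A"
    and tsg: "topological_semigroup_on A m"
    and mult: "continuous_map (prod_topology A A) A (\<lambda>z. m (fst z) (snd z))"
    using A by (simp_all add: compact_hausdorff_topsemigroup_def topological_semigroup_on_def)
  have C_sub: "C \<subseteq> topspace A" using C closedin_subset by blast
  have "continuous_map (prod_topology (subtopology A C) (subtopology A C)) A (\<lambda>z. m (fst z) (snd z))"
    using continuous_map_from_subtopology[OF mult, of "C \<times> C"] by (simp add: subtopology_Times)
  then have "continuous_map (prod_topology (subtopology A C) (subtopology A C)) (subtopology A C)
      (\<lambda>z. m (fst z) (snd z))"
    using C_mult C_sub by (auto simp: continuous_map_in_subtopology)
  moreover have "compact_space (subtopology A C)"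
    by (rule compact_space_subtopology[OF closedin_compact_space[OF compact C]])
  moreover have "Hausdorff_space (subtopology A C)" by (rule Hausdorff_space_subtopology[OF Hausdorff])
  ultimately show ?thesis
    using tsg C_sub C_mult
    by (auto simp: compact_hausdorff_topsemigroup_def topological_semigroup_on_def Int_absorb1 subset_iff)
qed

text \<open>The image of a semitopological semigroup is dense in its almost periodic
  compactification: the closure of the image is itself a compact subsemigroup through
  which \<open>\<eta>\<close> factors, and by uniqueness the resulting retraction is the identity.\<close>

lemma almost_periodic_image_dense:
  fixes \<eta> :: "'a::{times, topological_space} \<Rightarrow> 'c"
  assumes ap: "almost_periodic_compactification A mA \<eta>"
  shows "A closure_of range \<eta> = topspace A"
proof -
  have A: "compact_hausdorff_topsemigroup A mA" and \<eta>: "cont_hom_into A mA \<eta>"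
    using ap by (simp_all add: almost_periodic_compactification_def)
  then have tsg: "topological_semigroup_on A mA"
    and \<eta>_cont: "continuous_map euclidean A \<eta>" and \<eta>_hom: "\<And>x y. \<eta> (x * y) = mA (\<eta> x) (\<eta> y)"
    by (simp_all add: compact_hausdorff_topsemigroup_def cont_hom_into_def)
  define Cl where "Cl = A closure_of range \<eta>"
  have Cl_sub: "Cl \<subseteq> topspace A" by (simp add: Cl_def closure_of_subset_topspace)
  have range_mult: "mA x y \<in> range \<eta>" if "x \<in> range \<eta>" "y \<in> range \<eta>" for x y
    using that by (auto simp: \<eta>_hom[symmetric])
  have "compact_hausdorff_topsemigroup (subtopology A Cl) mA"
    unfolding Cl_def
    by (rule closed_subsemigroup[OF A]) (auto intro: closure_of_subsemigroup[OF tsg range_mult])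
  moreover have "range \<eta> \<subseteq> Cl"
    using closure_of_subset continuous_map_image_subset_topspace[OF \<eta>_cont] by (simp add: Cl_def)
  then have "cont_hom_into (subtopology A Cl) mA \<eta>"
    using \<eta>_cont \<eta>_hom by (auto simp: cont_hom_into_def continuous_map_in_subtopology)
  ultimately obtain r where r: "continuous_map A (subtopology A Cl) r"
      "\<forall>x\<in>topspace A. \<forall>y\<in>topspace A. r (mA x y) = mA (r x) (r y)" "\<forall>s. \<eta> s = r (\<eta> s)"
    using ap unfolding almost_periodic_compactification_def by blast
  obtain r0 where unique: "\<And>r'. continuous_map A A r' \<Longrightarrow>
        (\<forall>x\<in>topspace A. \<forall>y\<in>topspace A. r' (mA x y) = mA (r' x) (r' y)) \<Longrightarrow>
        (\<forall>s. \<eta> s = r' (\<eta> s)) \<Longrightarrow> (\<forall>z\<in>topspace A. r' z = r0 z)"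
    using ap A \<eta> unfolding almost_periodic_compactification_def by metis
  have "continuous_map A A r" using r(1) by (simp add: continuous_map_in_subtopology)
  then have "r z = z" if "z \<in> topspace A" for z
    using unique[of r] unique[of id] r(2,3) that by simp
  moreover have "r z \<in> Cl" if "z \<in> topspace A" for z
    using r(1) that Cl_sub by (auto simp: continuous_map_def)
  ultimately have "topspace A \<subseteq> Cl" by force
  with Cl_sub show ?thesis by (simp add: Cl_def)
qed

locale dense_bicyclic =
  fixes e :: "nat \<times> nat \<Rightarrow> 'a::{t2_space, semigroup_mult}"
  assumes mult_cont: "continuous_on UNIV (\<lambda>z::'a \<times> 'a. fst z * snd z)"
    and inj: "inj e"
    and hom: "\<And>x y. e (bicyclic_mult x y) = e x * e y"
    and dense: "closure (range e) = UNIV"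

begin

lemma e_eq_iff: "e x = e y \<longleftrightarrow> x = y"
  using inj by (auto dest: injD)

lemma mult_cont_swapped: "continuous_on UNIV (\<lambda>z::'a \<times> 'a. snd z * fst z)"
proof -
  have "continuous_on UNIV ((\<lambda>z::'a \<times> 'a. fst z * snd z) \<circ> (\<lambda>z. (snd z, fst z)))"
    by (intro continuous_on_compose continuous_intros continuous_on_subset[OF mult_cont]) auto
  then show ?thesis by (simp add: o_def)
qed

lemma left_mult_cont: "continuous_on UNIV (\<lambda>x. a * x :: 'a)"
proof -
  have "continuous_on UNIV ((\<lambda>z::'a \<times> 'a. fst z * snd z) \<circ> (\<lambda>x. (a, x)))"
    by (intro continuous_on_compose continuous_intros continuous_on_subset[OF mult_cont]) auto
  then show ?thesis by (simp add: o_def)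
qed

lemma right_mult_cont: "continuous_on UNIV (\<lambda>x. x * a :: 'a)"
proof -
  have "continuous_on UNIV ((\<lambda>z::'a \<times> 'a. fst z * snd z) \<circ> (\<lambda>x. (x, a)))"
    by (intro continuous_on_compose continuous_intros continuous_on_subset[OF mult_cont]) auto
  then show ?thesis by (simp add: o_def)
qed

lemma open_vimage_mult: "open B \<Longrightarrow> open ((\<lambda>z::'a \<times> 'a. fst z * snd z) -` B)"
  by (rule continuous_imp_open_vimage[OF mult_cont]) auto

lemma closed_vimage_mult: "closed B \<Longrightarrow> closed ((\<lambda>z::'a \<times> 'a. fst z * snd z) -` B)"
  using open_vimage_mult[of "- B"] by (simp add: closed_def vimage_Compl)

text \<open>The identity \<open>1 = e (0,0)\<close> is isolated in the dense subsemigroup: every other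
  element \<open>p\<^sup>n q\<^sup>m\<close> is fixed by left or right multiplication with \<open>pq = e (1,1)\<close>.\<close>

lemma isolated_identity: "\<exists>U. open U \<and> U \<inter> range e = {e (0, 0)}"
proof -
  define Z where "Z = {x. e (1, 1) * x = x} \<union> {x. x * e (1, 1) = x}"
  have "closed Z" unfolding Z_def
    by (intro closed_Un closed_Collect_eq continuous_intros left_mult_cont right_mult_cont)
  have other: "e d \<in> Z" if "d \<noteq> (0, 0)" for d
  proof (cases "fst d = 0")
    case True
    then have "bicyclic_mult d (1, 1) = d" using that by (cases d) (simp add: bicyclic_mult_pairs)
    then show ?thesis by (simp add: Z_def hom[symmetric])
  next
    case False
    then have "bicyclic_mult (1, 1) d = d" by (cases d) (simp add: bicyclic_mult_pairs)
    then show ?thesis by (simp add: Z_def hom[symmetric])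
  qed
  have "e (0, 0) \<notin> Z" by (auto simp: Z_def hom[symmetric] bicyclic_mult_pairs e_eq_iff)
  then have "- Z \<inter> range e = {e (0, 0)}" using other by auto (metis neq0_conv)
  then show ?thesis using \<open>closed Z\<close> by (intro exI[of _ "- Z"]) (simp add: open_Compl)
qed

text \<open>The map
  \<open>x \<mapsto> q\<^sup>n x p\<^sup>m\<close> sends \<open>p\<^sup>n q\<^sup>m\<close> to \<open>1\<close> and only finitely many points of \<open>C(p,q)\<close>
  to \<open>1\<close>, so some open set meets \<open>C(p,q)\<close> exactly in \<open>e c\<close>; by density it is \<open>{e c}\<close>.\<close>

lemma open_point: "open {e c}"
proof -
  obtain n m where c: "c = (n, m)" by fastforce
  obtain U where U: "open U" "U \<inter> range e = {e (0, 0)}" using isolated_identity by blast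
  define \<psi> where "\<psi> x = e (0, n) * x * e (m, 0)" for x
  have \<psi>_e: "\<psi> (e d) = e (bicyclic_mult (bicyclic_mult (0, n) d) (m, 0))" for d
    by (simp add: \<psi>_def hom)
  define F where "F = {d. bicyclic_mult (bicyclic_mult (0, n) d) (m, 0) = (0, 0)}"
  have "c \<in> F" by (simp add: F_def c bicyclic_mult_pairs)
  define W where "W = \<psi> -` U - e ` (F - {c})"
  have "continuous_on UNIV \<psi>"
    unfolding \<psi>_def by (rule continuous_on_compose2[OF right_mult_cont left_mult_cont]) auto
  then have "open (\<psi> -` U)" using U(1) by (simp add: open_vimage)
  moreover have "finite F" by (simp add: F_def finite_middle_factors)
  ultimately have W_open: "open W" unfolding W_def by (intro open_Diff finite_imp_closed) auto
  have W_e: "W \<inter> range e = {e c}"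
  proof (intro equalityI subsetI)
    fix z assume "z \<in> W \<inter> range e"
    then obtain d where d: "z = e d" "\<psi> (e d) \<in> U" "e d \<notin> e ` (F - {c})" by (auto simp: W_def)
    have "e (bicyclic_mult (bicyclic_mult (0, n) d) (m, 0)) \<in> U \<inter> range e" using d(2) \<psi>_e by simp
    then have "d \<in> F" using U(2) by (simp add: F_def e_eq_iff)
    then show "z \<in> {e c}" using d by auto
  next
    fix z assume "z \<in> {e c}"
    then show "z \<in> W \<inter> range e" using U(2) \<open>c \<in> F\<close> by (auto simp: W_def F_def \<psi>_e e_eq_iff)
  qed
  have "W \<subseteq> closure (W \<inter> range e)"
    using open_Int_closure_subset[OF W_open, of "range e"] dense by simp
  then have "W = {e c}" using W_e by auto
  with W_open show ?thesis by simp
qed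

lemma remainder_nbhd_infinite:
  assumes "s \<notin> range e" "open U" "s \<in> U"
  shows "infinite (U \<inter> range e)"
proof
  assume fin: "finite (U \<inter> range e)"
  have "s islimpt range e" using assms(1) dense by (auto simp: closure_def)
  moreover have "s \<in> U - (U \<inter> range e)" using assms by auto
  moreover have "open (U - (U \<inter> range e))" using fin assms(2) by (intro open_Diff finite_imp_closed)
  ultimately obtain y where "y \<in> range e" "y \<in> U - (U \<inter> range e)" by (rule islimptE)
  then show False by simp
qed

text \<open>The heart of part (1), stated for an abstract continuous operation so that it
  applies to both orders of multiplication: if the equations \<open>x \<cdot> y = c\<close> in \<open>C(p,q)\<close>
  have finitely many solutions \<open>x\<close>, then no product \<open>s \<cdot> t\<close> with \<open>s\<close> in the remainder
  lies in \<open>C(p,q)\<close>.\<close>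

lemma remainder_product_not_in_range:
  fixes op :: "'a \<Rightarrow> 'a \<Rightarrow> 'a"
  assumes op_cont: "continuous_on UNIV (\<lambda>z. op (fst z) (snd z))"
    and finite_solutions: "\<And>y. finite {x. op (e x) (e y) = e c}"
    and s: "s \<notin> range e"
  shows "op s t \<noteq> e c"
proof
  assume st: "op s t = e c"
  let ?G = "(\<lambda>z. op (fst z) (snd z)) -` {e c}"
  have "open ?G" by (rule continuous_imp_open_vimage[OF op_cont open_UNIV open_point]) auto
  moreover have "(s, t) \<in> ?G" using st by simp
  ultimately obtain U V where UV: "open U" "open V" "(s, t) \<in> U \<times> V" "U \<times> V \<subseteq> ?G"
    by (rule open_prod_elim)
  obtain y where y: "e y \<in> V"
    using open_Int_closure_eq_empty[OF UV(2), of "range e"] dense UV(3) by auto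
  have "U \<inter> range e \<subseteq> e ` {x. op (e x) (e y) = e c}" using UV(4) y by auto
  moreover have "infinite (U \<inter> range e)" using remainder_nbhd_infinite[OF s UV(1)] UV(3) by simp
  ultimately show False using finite_solutions[of y] by (meson finite_imageI finite_subset)
qed

lemma remainder_ideal: "s \<notin> range e \<Longrightarrow> s * t \<notin> range e \<and> t * s \<notin> range e"
proof -
  assume s: "s \<notin> range e"
  have "s * t \<noteq> e c" for c
    by (rule remainder_product_not_in_range[OF mult_cont _ s])
      (simp add: hom[symmetric] e_eq_iff finite_left_factors)
  moreover have "t * s \<noteq> e c" for c
    by (rule remainder_product_not_in_range[OF mult_cont_swapped _ s, simplified])
      (simp add: hom[symmetric] e_eq_iff finite_right_factors)
  ultimately show ?thesis by auto
qed

text \<open>By part (1), all solutions of \<open>s t = e c\<close> in \<open>S\<close> already lie in \<open>C(p,q)\<close>.\<close>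

lemma factor_set_eq:
  "{(e x, e y) | x y. bicyclic_mult x y = c} = (\<lambda>z::'a \<times> 'a. fst z * snd z) -` {e c}"
proof (intro equalityI subsetI)
  fix z assume z: "z \<in> (\<lambda>z::'a \<times> 'a. fst z * snd z) -` {e c}"
  obtain s t where st: "z = (s, t)" by fastforce
  then have "s * t = e c" using z by simp
  then have "s \<in> range e" "t \<in> range e" using remainder_ideal by blast+
  then obtain x y where xy: "s = e x" "t = e y" by auto
  then have "bicyclic_mult x y = c" using \<open>s * t = e c\<close> by (simp add: hom[symmetric] e_eq_iff)
  then show "z \<in> {(e x, e y) | x y. bicyclic_mult x y = c}" using xy st by blast
qed (force simp: hom[symmetric])

lemma open_point_pair: "open {(e x, e y)}"
  using open_Times[OF open_point open_point] by simp

text \<open>Part (2): \<open>D\<^sub>c\<close> is the preimage of the clopen point \<open>e c\<close> under multiplication,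
  and consists of isolated points of \<open>S \<times> S\<close>.\<close>

lemma factor_set_clopen_discrete:
  "let D = {(e x, e y) | x y. bicyclic_mult x y = c} in
     open D \<and> closed D \<and> subtopology euclidean D = discrete_topology D"
proof -
  define D where "D = {(e x, e y) | x y. bicyclic_mult x y = c}"
  have "open D" unfolding D_def factor_set_eq by (rule open_vimage_mult[OF open_point])
  moreover have "closed D" unfolding D_def factor_set_eq by (rule closed_vimage_mult) simp
  moreover have "openin (subtopology euclidean D) {z}" if "z \<in> D" for z
  proof -
    have "open {z}" using that open_point_pair by (auto simp: D_def)
    then show ?thesis unfolding openin_subtopology using that by (intro exI[of _ "{z}"]) auto
  qed
  then have "subtopology euclidean D = discrete_topology D"
    by (subst eq_commute) (simp add: discrete_topology_unique)
  ultimately show ?thesis by (simp add: D_def Let_def)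
qed

text \<open>Part (3): \<open>D\<^sub>1\<close> is an infinite closed set of isolated points of \<open>S \<times> S\<close>, as it
  contains all pairs \<open>(q\<^sup>n, p\<^sup>n)\<close>.\<close>

lemma product_not_pseudocompact: "\<not> pseudocompact_space (euclidean :: ('a \<times> 'a) topology)"
proof (rule not_pseudocompact_space)
  let ?D = "{(e x, e y) | x y. bicyclic_mult x y = (0, 0)}"
  show "closedin euclidean ?D" unfolding factor_set_eq by (simp add: closed_vimage_mult)
  show "openin euclidean {z}" if "z \<in> ?D" for z using that open_point_pair by auto
  have "bicyclic_mult (0, n) (n, 0) = (0, 0)" for n by (simp add: bicyclic_mult_pairs)
  then have "range (\<lambda>n. (e (0, n), e (n, 0))) \<subseteq> ?D" by blast
  moreover have "inj (\<lambda>n. (e (0, n), e (n, 0)))" by (rule injI) (simp add: e_eq_iff)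
  ultimately show "infinite ?D" using range_inj_infinite infinite_super by blast
qed

text \<open>The weight function on \<open>S\<close> takes the value \<open>2\<^sup>-\<^sup>k\<close> at the \<open>k\<close>-th point
  of \<open>C(p,q)\<close> (in the Cantor enumeration of \<open>\<nat> \<times> \<nat>\<close>) and vanishes on the remainder.
  It is continuous because the points of \<open>C(p,q)\<close> are isolated and only finitely many
  of them have weight above any \<open>\<epsilon> > 0\<close>; and each of its values on \<open>C(p,q)\<close> is
  isolated in its range.\<close>

definition weight :: "'a \<Rightarrow> real" where
  "weight s = (if s \<in> range e then (1/2) ^ prod_encode (inv e s) else 0)"

lemma weight_e: "weight (e c) = (1/2) ^ prod_encode c"
  using inj by (simp add: weight_def)

lemma weight_remainder: "s \<notin> range e \<Longrightarrow> weight s = 0"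
  by (simp add: weight_def)

lemma weight_tendsto_zero: "s \<notin> range e \<Longrightarrow> (weight \<longlongrightarrow> 0) (at s)"
proof (rule tendstoI)
  fix \<epsilon> :: real assume "\<epsilon> > 0" and s: "s \<notin> range e"
  obtain N where N: "(1/2::real) ^ N < \<epsilon>" using real_arch_pow_inv[OF \<open>\<epsilon> > 0\<close>, of "1/2"] by auto
  define Heavy where "Heavy = e ` (prod_encode -` {..N})"
  have "finite Heavy"
    unfolding Heavy_def by (intro finite_imageI finite_vimageI) (auto simp: inj_prod_encode)
  then have "open (- Heavy)" by (simp add: finite_imp_closed open_Compl)
  moreover have "s \<in> - Heavy" using s by (auto simp: Heavy_def)
  moreover have "dist (weight y) 0 < \<epsilon>" if "y \<in> - Heavy" for y
  proof (cases "y \<in> range e")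
    case True
    then obtain c where y: "y = e c" by auto
    then have "N < prod_encode c" using that by (auto simp: Heavy_def)
    then have "(1/2::real) ^ prod_encode c \<le> (1/2) ^ N" by (intro power_decreasing) auto
    then have "(1/2::real) ^ prod_encode c < \<epsilon>" using N by linarith
    then show ?thesis using y by (simp add: weight_e)
  qed (use \<open>\<epsilon> > 0\<close> weight_remainder in simp)
  ultimately show "\<forall>\<^sub>F y in at s. dist (weight y) 0 < \<epsilon>"
    unfolding eventually_at_topological by blast
qed

lemma weight_continuous: "continuous_map euclidean (top_of_set {0..1}) weight"
proof -
  have "isCont weight s" for s
  proof (cases "s \<in> range e")
    case True
    then have "at s = bot" using open_point by (auto simp: at_eq_bot_iff)
    then show ?thesis by (simp add: continuous_at)
  next
    case False
    then show ?thesis using weight_tendsto_zero by (simp add: continuous_at weight_remainder)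
  qed
  moreover have "weight s \<in> {0..1}" for s by (auto simp: weight_def power_le_one)
  ultimately show ?thesis
    by (auto simp: continuous_map_in_subtopology continuous_at_imp_continuous_on)
qed

lemma weight_isolated_value:
  assumes "weight s \<in> {weight (e c) / 2 <..< 2 * weight (e c)}"
  shows "s = e c"
proof (rule ccontr)
  assume "s \<noteq> e c"
  have "0 < weight (e c)" by (simp add: weight_e)
  then have "s \<in> range e" using assms weight_remainder[of s] by force
  then obtain c' where s: "s = e c'" by auto
  define k k' where "k = prod_encode c" and "k' = prod_encode c'"
  have "k' \<noteq> k" using \<open>s \<noteq> e c\<close> by (auto simp: s k_def k'_def prod_encode_eq)
  have "(1/2::real) ^ k' \<le> (1/2) ^ k / 2 \<or> 2 * (1/2::real) ^ k \<le> (1/2) ^ k'"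
  proof (cases "k < k'")
    case True
    then have "(1/2::real) ^ k' \<le> (1/2) ^ Suc k" by (intro power_decreasing) auto
    then show ?thesis by simp
  next
    case False
    then have "(1/2::real) ^ k \<le> (1/2) ^ Suc k'" using \<open>k' \<noteq> k\<close> by (intro power_decreasing) auto
    then show ?thesis by simp
  qed
  then show False using assms by (auto simp: s weight_e k_def k'_def)
qed

lemma weight_extension_fibre:
  assumes sc: "stone_cech_compactification (euclidean :: 'a topology) K j"
    and f: "continuous_map K (top_of_set {0..1}) f" "\<And>s. f (j s) = weight s"
    and u: "u \<in> topspace K" "f u = f (j (e c))"
  shows "u = j (e c)"
proof -
  have Hausdorff: "Hausdorff_space K" and dense_j: "K closure_of range j = topspace K"
    using sc by (auto simp: stone_cech_compactification_def)
  have j_in: "j (e c) \<in> topspace K"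
    using stone_cech_continuous[OF sc] by (auto simp: continuous_map_def)
  show ?thesis
  proof (rule extension_fibre_of_isolated_value[where j = j and x\<^sub>0 = "e c" and X = euclidean
        and F = weight, OF Hausdorff _ j_in _ _ _ _ _ u(1)])
    show "K closure_of (j ` topspace euclidean) = topspace K" using dense_j by simp
    show "continuous_map K euclidean f" using f(1) by (simp add: continuous_map_in_subtopology)
    show "open {weight (e c) / 2 <..< 2 * weight (e c)}" by simp
    show "weight (e c) \<in> {weight (e c) / 2 <..< 2 * weight (e c)}" by (simp add: weight_e)
    show "x = e c" if "weight x \<in> {weight (e c) / 2 <..< 2 * weight (e c)}" for x
      using weight_isolated_value[OF that] .
  qed (use f u in simp_all)
qed

text \<open>Let \<open>p : \<beta>S \<rightarrow> M\<close> be an open surjection in whose fibres the points of \<open>C(p,q)\<close> are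
  alone. If the images under \<open>p\<close> of an injective sequence in \<open>C(p,q)\<close> converge, then the
  sequence converges in \<open>\<beta>S\<close>, to a point of \<open>S\<close>, hence already in \<open>S\<close>.\<close>

lemma open_factor_lifts_limits:
  assumes sc: "stone_cech_compactification (euclidean :: 'a topology) K j"
    and p: "open_map K M p" "p ` topspace K = topspace M"
    and fibres: "\<And>u c. u \<in> topspace K \<Longrightarrow> p u = p (j (e c)) \<Longrightarrow> u = j (e c)"
    and w: "inj w" and lim: "limitin M (\<lambda>k. p (j (e (w k)))) \<alpha> sequentially"
  shows "\<exists>s. (\<lambda>k. e (w k)) \<longlonglongrightarrow> s"
proof -
  have emb: "embedding_map euclidean K j" using sc by (simp add: stone_cech_compactification_def)
  have "\<alpha> \<in> p ` topspace K" using limitin_topspace[OF lim] p(2) by simp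
  then obtain \<sigma> where \<sigma>: "\<sigma> \<in> topspace K" "p \<sigma> = \<alpha>" by auto
  have lim_K: "limitin K (\<lambda>k. j (e (w k))) \<sigma> sequentially"
  proof (rule open_map_reflects_limit[OF p(1) \<sigma>(1)])
    show "u = j (e (w k))" if "u \<in> topspace K" "p u = p (j (e (w k)))" for k u
      using fibres[OF that] .
    show "limitin M (\<lambda>k. p (j (e (w k)))) (p \<sigma>) sequentially" using lim \<sigma>(2) by simp
  qed
  have "inj (\<lambda>k. e (w k))" using inj_compose[OF inj w] by (simp add: o_def)
  from stone_cech_limit_of_isolated_points[OF sc open_point this lim_K]
  obtain s where "\<sigma> = j s" by blast
  then have "limitin euclidean (\<lambda>k. e (w k)) s sequentially"
    using embedding_map_reflects_limit[OF emb] lim_K by simp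
  then show ?thesis unfolding limitin_canonical_iff by blast
qed

text \<open>An open factorization of the extension of the weight function to \<open>\<beta>S\<close> provides
  a continuous map \<open>p\<close> into a compact metrizable space along which convergence of
  injective sequences in \<open>C(p,q)\<close> lifts to convergence in \<open>S\<close>.\<close>

lemma openly_factorizable_lifting:
  assumes sc: "stone_cech_compactification (euclidean :: 'a topology) K j"
    and factorizable: "openly_factorizable K"
  obtains M :: "real topology" and p where "compact_space M" "metrizable_space M"
    "continuous_map K M p"
    "\<And>w \<alpha>. inj w \<Longrightarrow> limitin M (\<lambda>k. p (j (e (w k)))) \<alpha> sequentially \<Longrightarrow>
       \<exists>s. (\<lambda>k. e (w k)) \<longlonglongrightarrow> s"
proof -
  have compact: "compact_space K"
    and ext: "\<And>f. continuous_map euclidean (top_of_set {0..1::real}) f \<Longrightarrow>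
        \<exists>g. continuous_map K (top_of_set {0..1::real}) g \<and> (\<forall>x. g (j x) = f x)"
    using sc by (auto simp: stone_cech_compactification_def)
  have j_in: "j x \<in> topspace K" for x
    using stone_cech_continuous[OF sc] by (auto simp: continuous_map_def)
  obtain f where f: "continuous_map K (top_of_set {0..1}) f" "\<And>s. f (j s) = weight s"
    using ext[OF weight_continuous] by blast
  obtain M :: "real topology" and p g where M: "metrizable_space M"
    and p: "continuous_map K M p" "open_map K M p" "p ` topspace K = topspace M"
    and fg: "\<forall>x\<in>topspace K. f x = g (p x)"
    using factorizable[unfolded openly_factorizable_def, rule_format, of "top_of_set {0..1}" f]
      unit_interval_separable_metrizable f(1) by blast
  have fibres: "u = j (e c)" if "u \<in> topspace K" "p u = p (j (e c))" for u c
  proof (rule weight_extension_fibre[OF sc f that(1)])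
    show "f u = f (j (e c))" using fg that j_in by simp
  qed
  have "compactin M (p ` topspace K)"
    using image_compactin[OF _ p(1)] compact by (simp add: compact_space_def)
  then have "compact_space M" using p(3) by (simp add: compact_space_def)
  moreover have "\<exists>s. (\<lambda>k. e (w k)) \<longlonglongrightarrow> s"
    if "inj w" "limitin M (\<lambda>k. p (j (e (w k)))) \<alpha> sequentially" for w \<alpha>
    using open_factor_lifts_limits[OF sc p(2,3) _ that] fibres by blast
  ultimately show thesis by (rule that[OF _ M p(1)])
qed

text \<open>If \<open>\<beta>S\<close> were openly factorizable, take \<open>p : \<beta>S \<rightarrow> M\<close> as above. A
  subsequence of \<open>(p q\<^sup>k, p p\<^sup>k)\<close> converges in \<open>M \<times> M\<close>, so the corresponding subsequence
  of \<open>(q\<^sup>k, p\<^sup>k)\<close> converges in \<open>S \<times> S\<close> to some \<open>(s, t)\<close> with \<open>s t = 1\<close>. By part (1), \<open>s\<close>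
  lies in \<open>C(p,q)\<close> and is thus an isolated limit of an injective sequence, which is
  impossible.\<close>

lemma stone_cech_not_openly_factorizable:
  assumes sc: "stone_cech_compactification (euclidean :: 'a topology) K j"
  shows "\<not> openly_factorizable K"
proof
  assume "openly_factorizable K"
  then obtain M :: "real topology" and p where M: "compact_space M" "metrizable_space M"
    and p: "continuous_map K M p"
    and lift: "\<And>w \<alpha>. inj w \<Longrightarrow> limitin M (\<lambda>k. p (j (e (w k)))) \<alpha> sequentially \<Longrightarrow>
       \<exists>s. (\<lambda>k. e (w k)) \<longlonglongrightarrow> s"
    using openly_factorizable_lifting[OF sc] by blast
  have j_in: "j x \<in> topspace K" for x
    using stone_cech_continuous[OF sc] by (auto simp: continuous_map_def)
  have "compact_space (prod_topology M M)" "metrizable_space (prod_topology M M)"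
    using M by (simp_all add: compact_space_prod_topology metrizable_space_prod_topology)
  moreover have "range (\<lambda>k. (p (j (e (0, k))), p (j (e (k, 0))))) \<subseteq> topspace (prod_topology M M)"
    using p j_in by (auto simp: continuous_map_def)
  ultimately obtain r l where r: "strict_mono r"
    and l: "limitin (prod_topology M M) ((\<lambda>k. (p (j (e (0, k))), p (j (e (k, 0))))) \<circ> r) l sequentially"
    using compact_metrizable_convergent_subsequence by blast
  have "inj r" using r by (rule strict_mono_imp_inj_on)
  then have inj_q: "inj (\<lambda>k. (0::nat, r k))" and inj_p: "inj (\<lambda>k. (r k, 0::nat))"
    by (auto simp: inj_def)
  have "limitin M (\<lambda>k. p (j (e (0, r k)))) (fst l) sequentially"
    and "limitin M (\<lambda>k. p (j (e (r k, 0)))) (snd l) sequentially"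
    using l by (auto simp: limitin_pairwise o_def)
  with lift[OF inj_q] lift[OF inj_p]
  obtain s t where s: "(\<lambda>k. e (0, r k)) \<longlonglongrightarrow> s" and t: "(\<lambda>k. e (r k, 0)) \<longlonglongrightarrow> t"
    by blast
  have "(\<lambda>k. e (0, r k) * e (r k, 0)) \<longlonglongrightarrow> s * t"
    using continuous_on_tendsto_compose[OF mult_cont tendsto_Pair[OF s t]] by simp
  moreover have "e (0, r k) * e (r k, 0) = e (0, 0)" for k
    by (simp add: hom[symmetric] bicyclic_mult_pairs)
  ultimately have "s * t = e (0, 0)" by (simp add: LIMSEQ_const_iff)
  then have "s \<in> range e" using remainder_ideal[of s t] by auto
  then obtain c where "s = e c" by auto
  moreover have "inj (\<lambda>k. e (0, r k))" using inj_compose[OF inj inj_q] by (simp add: o_def)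
  ultimately show False using injective_sequence_not_tendsto_isolated[OF _ open_point] s by blast
qed

text \<open>The map \<open>\<psi> = \<eta> \<circ> e\<close> is a homomorphism of the bicyclic semigroup into the
  compact semigroup \<open>AP(S)\<close> with dense image, because \<open>C(p,q)\<close> is dense in \<open>S\<close> and \<open>\<eta>(S)\<close> is
  dense in \<open>AP(S)\<close>. So \<open>AP(S)\<close> is a compact abelian group, and \<open>\<psi>\<close> identifies \<open>pq\<close> with \<open>1\<close>.\<close>

lemma almost_periodic_compactification_group:
  fixes \<eta> :: "'a \<Rightarrow> 'c"
  assumes ap: "almost_periodic_compactification A mA \<eta>"
  shows "compact_abelian_topological_group A mA \<and> \<not> inj \<eta>"
proof
  have A: "compact_hausdorff_topsemigroup A mA"
    and \<eta>_cont: "continuous_map euclidean A \<eta>" and \<eta>_hom: "\<And>x y. \<eta> (x * y) = mA (\<eta> x) (\<eta> y)"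
    using ap by (simp_all add: almost_periodic_compactification_def cont_hom_into_def)
  define \<psi> where "\<psi> x = \<eta> (e x)" for x
  have \<psi>_in: "\<psi> x \<in> topspace A" for x
    using \<eta>_cont by (auto simp: \<psi>_def continuous_map_def)
  have \<psi>_hom: "\<psi> (bicyclic_mult x y) = mA (\<psi> x) (\<psi> y)" for x y
    by (simp add: \<psi>_def hom \<eta>_hom)
  have "\<eta> (e (1, 1)) = \<eta> (e (0, 0))"
    using bicyclic_hom_collapse[OF A \<psi>_in \<psi>_hom] by (simp add: \<psi>_def)
  moreover have "e (1, 1) \<noteq> e (0, 0)" by (simp add: e_eq_iff)
  ultimately show "\<not> inj \<eta>" unfolding inj_def by blast
  have "range \<eta> = \<eta> ` closure (range e)" using dense by simp
  also have "\<dots> \<subseteq> A closure_of (\<eta> ` range e)"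
    using continuous_map_image_closure_subset[OF \<eta>_cont, of "range e"] by simp
  also have "\<eta> ` range e = range \<psi>" by (auto simp: \<psi>_def)
  finally have "A closure_of range \<eta> \<subseteq> A closure_of range \<psi>"
    using closure_of_mono[of "range \<eta>" "A closure_of range \<psi>" A] by simp
  then have "topspace A \<subseteq> A closure_of range \<psi>"
    using almost_periodic_image_dense[OF ap] by simp
  then have "A closure_of range \<psi> = topspace A"
    using closure_of_subset_topspace[of A "range \<psi>"] by auto
  then show "compact_abelian_topological_group A mA"
    by (rule bicyclic_hom_dense_image_group[OF A \<psi>_in \<psi>_hom])
qed

end

text \<open>The theorem: the hypotheses form an instance of \<open>dense_bicyclic\<close>, and parts
  (1)-(5) are the lemmas established there.\<close>

theorem theorem5p1:
  fixes e :: "nat \<times> nat \<Rightarrow> 'a::{t2_space, semigroup_mult}"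
  assumes topsg: "continuous_on UNIV (\<lambda>z::'a \<times> 'a. fst z * snd z)"
    and inj: "inj e"
    and hom: "\<And>x y. e (bicyclic_mult x y) = e x * e y"
    and dense: "closure (range e) = UNIV"
  shows "(\<forall>s t. s \<notin> range e \<longrightarrow> s * t \<notin> range e \<and> t * s \<notin> range e)
    \<and> (\<forall>c. let D = {(e x, e y) | x y. bicyclic_mult x y = c} in
            open D \<and> closed D \<and> subtopology euclidean D = discrete_topology D)
    \<and> \<not> pseudocompact_space (euclidean :: ('a \<times> 'a) topology)
    \<and> (completely_regular_space (euclidean :: 'a topology) \<and> t1_space (euclidean :: 'a topology) \<longrightarrow>
        (\<forall>(K :: 'b topology) j. stone_cech_compactification (euclidean :: 'a topology) K j
             \<longrightarrow> \<not> openly_factorizable K))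
    \<and> (\<forall>(A :: 'c topology) mA (eta :: 'a \<Rightarrow> 'c).
          almost_periodic_compactification A mA eta \<longrightarrow>
            compact_abelian_topological_group A mA \<and> \<not> inj eta)"
proof -
  interpret dense_bicyclic e using topsg inj hom dense by unfold_locales
  show ?thesis
    using remainder_ideal factor_set_clopen_discrete product_not_pseudocompact
      stone_cech_not_openly_factorizable almost_periodic_compactification_group
    by blast
qed

end
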